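(* Let $T>0$ and let $\mathbf u_i(t)$ (continuously differentiable) and $p_i(t)$, $i=1,\dots,N_h$, solve the semi-discrete scheme (S1)–(S2) on $[0,T]$. Set $d^{\rm add}_{ij}=d^u_{ij}-\nu s_{ij}$. Then $$\int_0^T\sum_{i=1}^{N_h}\sum_{j\in\mathcal N_i\setminus\{i\}}\Big[\frac{d^{\rm add}_{ij}}{2}|\mathbf u_j-\mathbf u_i|^2+\frac{d^p_{ij}}{2}(p_j-p_i)^2\Big]dt=\sum_{i=1}^{N_h}m_i\eta(\mathbf u_i(0))-\sum_{i=1}^{N_h}m_i\eta(\mathbf u_i(T)).$$
   Context: Setting. Let $d\in\{2,3\}$ and let $\Omega\subset\mathbb R^d$ be a box on which periodic boundary conditions are imposed (all functions on $\Omega$ are periodic, so $\Omega$ is effectively a flat torus and integration by parts produces no boundary terms). $\mathcal T_h$ is a conforming simplicial mesh of $\Omega$ compatible with periodicity, with (periodically identified) vertices $\mathbf x_1,\dots,\mathbf x_{N_h}$; $\varphi_1,\dots,\varphi_{N_h}$ are the continuous piecewise-linear Lagrange basis functions ($\varphi_i(\mathbf x_j)=\delta_{ij}$), $V_h=\mathrm{span}\{\varphi_i\}$, $\mathbf V_h=(V_h)^d$. For $v_h\in V_h$ write $v_i=v_h(\mathbf x_i)$; similarly $\mathbf u_h=\sum_j\mathbf u_j\varphi_j$ for vector-valued functions. $\mathcal N_i$ is the set of indices $j$ (including $j=i$) for which the supports of $\varphi_i,\varphi_j$ overlap. Coefficients: $m_{ij}=\int_\Omega\varphi_i\varphi_j\,dx$,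 $m_i=\int_\Omega\varphi_i\,dx$, $\mathbf c_{ij}=\int_\Omega\varphi_i\nabla\varphi_j\,dx$, $s_{ij}=\int_\Omega\nabla\varphi_i\cdot\nabla\varphi_j\,dx$, and, for a given $\mathbf u_h=\sum_j\mathbf u_j\varphi_j$, $\tilde a_{ij}=\frac{\mathbf u_i+\mathbf u_j}{2}\cdot\mathbf c_{ij}$ and $a_{ij}=\frac12\int_\Omega[\varphi_i\,\mathbf u_h\cdot\nabla\varphi_j-\varphi_j\,\mathbf u_h\cdot\nabla\varphi_i]\,dx$. The kinetic energy is $\eta(\mathbf u)=|\mathbf u|^2/2$. Scheme. Given a viscosity $\nu\ge 0$ and symmetric matrices $D^u=(d^u_{ij})$, $D^p=(d^p_{ij})$ with zero row sums ($\sum_j d^u_{ij}=\sum_j d^p_{ij}=0$) and $d^u_{ij}=d^p_{ij}=0$ for $j\notin\mathcal N_i$ (the entries $d^u_{ij}$ may depend on the current velocity), the semi-discrete scheme is the system, for all $i,k=1,\dots,N_h$, (S1) $m_i\frac{d\mathbf u_i}{dt}=\sum_{j\in\mathcal N_i}\big[(d^u_{ij}-\tilde a_{ij}-\nu s_{ij})\mathbf u_j-\mathbf c_{ij}p_j\big]$, (S2) $0=\sum_{j\in\mathcal N_k}\big[d^p_{kj}p_j-\mathbf c_{kj}\cdot\mathbf u_j\big]$, where $\tilde a_{ij}$ is computed from the current $\mathbf u_h(t)$. *)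

theory Defs
  imports "HOL-Analysis.Analysis"
begin

text \<open>The box Omega is cbox 0 L (side lengths L). Periodicity is modelled on the
universal cover R^d: the mesh is lifted to a lattice-periodic simplicial mesh of R^d.\<close>

definition lattice :: "real^'d \<Rightarrow> (real^'d) set" where
  "lattice L = {z. \<forall>k. \<exists>n::int. z$k = of_int n * L$k}"

definition periodic_mesh :: "real^'d \<Rightarrow> (real^'d) set set \<Rightarrow> bool" where
  "periodic_mesh L Th \<longleftrightarrow>
     (\<forall>S\<in>Th. int CARD('d) simplex S) \<and>
     (\<forall>S\<in>Th. \<forall>S'\<in>Th. (S \<inter> S') face_of S \<and> (S \<inter> S') face_of S') \<and>
     \<Union>Th = UNIV \<and>
     (\<forall>S\<in>Th. \<forall>z\<in>lattice L. (\<lambda>y. z + y) ` S \<in> Th) \<and>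
     (\<forall>S\<in>Th. \<exists>z\<in>lattice L. (\<lambda>y. z + y) ` S \<subseteq> cbox 0 L) \<and>
     (\<forall>B. bounded B \<longrightarrow> finite {S\<in>Th. S \<inter> B \<noteq> {}})"

definition mesh_vertices :: "(real^'d) set set \<Rightarrow> (real^'d) set" where
  "mesh_vertices Th = {v. \<exists>S\<in>Th. v extreme_point_of S}"

text \<open>x 1, ..., x N are the periodically identified vertices (one representative per
lattice class of mesh vertices) and phi i the continuous piecewise-linear Lagrange basis
function attached to x i (lifted periodically to R^d).\<close>
definition P1_nodal_basis ::
  "real^'d \<Rightarrow> (real^'d) set set \<Rightarrow> nat \<Rightarrow> (nat \<Rightarrow> real^'d) \<Rightarrow> (nat \<Rightarrow> real^'d \<Rightarrow> real) \<Rightarrow> bool" where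
  "P1_nodal_basis L Th N x \<phi> \<longleftrightarrow>
     (\<forall>i\<in>{1..N}. x i \<in> mesh_vertices Th) \<and>
     (\<forall>v\<in>mesh_vertices Th. \<exists>!i. i \<in> {1..N} \<and> v - x i \<in> lattice L) \<and>
     (\<forall>i\<in>{1..N}. continuous_on UNIV (\<phi> i) \<and>
        (\<forall>S\<in>Th. \<exists>a b. \<forall>y\<in>S. \<phi> i y = a \<bullet> y + b) \<and>
        (\<forall>v\<in>mesh_vertices Th. \<phi> i v = (if v - x i \<in> lattice L then 1 else 0)))"

definition grad :: "(real^'d \<Rightarrow> real) \<Rightarrow> real^'d \<Rightarrow> real^'d" where
  "grad f y = (\<chi> k. frechet_derivative f (at y) (axis k 1))"

definition lumped_mass :: "real^'d \<Rightarrow> (nat \<Rightarrow> real^'d \<Rightarrow> real) \<Rightarrow> nat \<Rightarrow> real" where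
  "lumped_mass L \<phi> i = integral (cbox 0 L) (\<phi> i)"

definition cmat :: "real^'d \<Rightarrow> (nat \<Rightarrow> real^'d \<Rightarrow> real) \<Rightarrow> nat \<Rightarrow> nat \<Rightarrow> real^'d" where
  "cmat L \<phi> i j = integral (cbox 0 L) (\<lambda>y. \<phi> i y *\<^sub>R grad (\<phi> j) y)"

definition stiff :: "real^'d \<Rightarrow> (nat \<Rightarrow> real^'d \<Rightarrow> real) \<Rightarrow> nat \<Rightarrow> nat \<Rightarrow> real" where
  "stiff L \<phi> i j = integral (cbox 0 L) (\<lambda>y. grad (\<phi> i) y \<bullet> grad (\<phi> j) y)"

definition nbhd :: "nat \<Rightarrow> (nat \<Rightarrow> real^'d \<Rightarrow> real) \<Rightarrow> nat \<Rightarrow> nat set" where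
  "nbhd N \<phi> i = {j \<in> {1..N}. \<exists>y. \<phi> i y \<noteq> 0 \<and> \<phi> j y \<noteq> 0}"

definition eta :: "real^'d \<Rightarrow> real" where
  "eta u = (norm u)\<^sup>2 / 2"

end

(*
  Testing (S1) with u_i and summing over i gives the time derivative of the discrete kinetic
  energy sum_i m_i eta(u_i).  For a symmetric matrix W with zero row sums,
  sum_ij W_ij u_i.u_j = - sum_ij W_ij/2 |u_j - u_i|^2, which produces the dissipation terms of
  D^u - nu S and, after (S2) has been used to rewrite the pressure work, of D^p.  The convective
  term drops out because c_ij is skew-symmetric, and sum_j s_ij = 0 because the basis functions
  form a partition of unity, so their gradients sum to zero off the mesh skeleton.
  Skew-symmetry is integration by parts on the torus: c_ij + c_ji is the integral over the box of
  a partial derivative of the periodic, piecewise affine function phi_i phi_j, which vanishes.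
*)

theory Submission
  imports Defs
begin

section \<open>Discrete energy balance\<close>

lemma sum_sum_swap_symmetric:
  assumes fin: "finite I" and sub: "\<And>i. nb i \<subseteq> I"
    and sym: "\<And>i j. i \<in> I \<Longrightarrow> j \<in> I \<Longrightarrow> j \<in> nb i \<longleftrightarrow> i \<in> nb j"
  shows "(\<Sum>i\<in>I. \<Sum>j\<in>nb i. f i j) = (\<Sum>i\<in>I. \<Sum>j\<in>nb i. f j i)"
proof -
  have nb_eq: "nb i = {j\<in>I. i \<in> nb j}" if "i \<in> I" for i
    using sub sym that by blast
  have "(\<Sum>i\<in>I. \<Sum>j\<in>nb i. f i j) = (\<Sum>i\<in>I. \<Sum>j\<in>{j\<in>I. i \<in> nb j}. f i j)"
    using nb_eq by (intro sum.cong) auto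
  also have "\<dots> = (\<Sum>j\<in>I. \<Sum>i\<in>{i\<in>I. i \<in> nb j}. f i j)"
    by (rule sum.swap_restrict[OF fin fin])
  also have "\<dots> = (\<Sum>j\<in>I. \<Sum>i\<in>nb j. f i j)"
    using sub by (intro sum.cong refl) blast
  finally show ?thesis .
qed

lemma zero_row_sum_quadratic_form:
  fixes V :: "'i \<Rightarrow> 'a::real_inner"
  assumes fin: "finite I" and sub: "\<And>i. nb i \<subseteq> I"
    and sym: "\<And>i j. i \<in> I \<Longrightarrow> j \<in> I \<Longrightarrow> j \<in> nb i \<longleftrightarrow> i \<in> nb j"
    and W_sym: "\<And>i j. i \<in> I \<Longrightarrow> j \<in> I \<Longrightarrow> W i j = W j i"
    and W_row: "\<And>i. i \<in> I \<Longrightarrow> (\<Sum>j\<in>nb i. W i j) = 0"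
  shows "(\<Sum>i\<in>I. \<Sum>j\<in>nb i. W i j * (V i \<bullet> V j))
       = - (\<Sum>i\<in>I. \<Sum>j\<in>nb i. W i j / 2 * (norm (V j - V i))\<^sup>2)"
proof -
  have diag: "(\<Sum>i\<in>I. \<Sum>j\<in>nb i. W i j * (V i \<bullet> V i)) = 0"
    by (simp add: sum_distrib_right[symmetric] W_row)
  have "(\<Sum>i\<in>I. \<Sum>j\<in>nb i. W i j * (V j \<bullet> V j)) = (\<Sum>i\<in>I. \<Sum>j\<in>nb i. W j i * (V i \<bullet> V i))"
    by (rule sum_sum_swap_symmetric[OF fin sub sym])
  also have "\<dots> = (\<Sum>i\<in>I. \<Sum>j\<in>nb i. W i j * (V i \<bullet> V i))"
    using sub W_sym by (intro sum.cong refl) (metis subsetD)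
  finally have diag': "(\<Sum>i\<in>I. \<Sum>j\<in>nb i. W i j * (V j \<bullet> V j)) = 0"
    using diag by simp
  have "(\<Sum>i\<in>I. \<Sum>j\<in>nb i. W i j / 2 * (norm (V j - V i))\<^sup>2)
      = (\<Sum>i\<in>I. \<Sum>j\<in>nb i. W i j * (V j \<bullet> V j) / 2 - W i j * (V i \<bullet> V j) + W i j * (V i \<bullet> V i) / 2)"
    by (intro sum.cong refl) (simp add: power2_norm_eq_inner inner_diff algebra_simps inner_commute)
  also have "\<dots> = - (\<Sum>i\<in>I. \<Sum>j\<in>nb i. W i j * (V i \<bullet> V j))"
    using diag diag' by (simp add: sum.distrib sum_subtractf sum_divide_distrib[symmetric] sum_negf)
  finally show ?thesis by simp
qed

lemma semidiscrete_energy_balance: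
  fixes U :: "'i \<Rightarrow> 'a::real_inner" and C :: "'i \<Rightarrow> 'i \<Rightarrow> 'a"
    and P :: "'i \<Rightarrow> real" and D Dp :: "'i \<Rightarrow> 'i \<Rightarrow> real"
  assumes fin: "finite I" and sub: "\<And>i. nb i \<subseteq> I"
    and sym: "\<And>i j. i \<in> I \<Longrightarrow> j \<in> I \<Longrightarrow> j \<in> nb i \<longleftrightarrow> i \<in> nb j"
    and D_sym: "\<And>i j. i \<in> I \<Longrightarrow> j \<in> I \<Longrightarrow> D i j = D j i"
    and Dp_sym: "\<And>i j. i \<in> I \<Longrightarrow> j \<in> I \<Longrightarrow> Dp i j = Dp j i"
    and D_row: "\<And>i. i \<in> I \<Longrightarrow> (\<Sum>j\<in>nb i. D i j) = 0"
    and Dp_row: "\<And>i. i \<in> I \<Longrightarrow> (\<Sum>j\<in>nb i. Dp i j) = 0"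
    and C_skew: "\<And>i j. i \<in> I \<Longrightarrow> j \<in> I \<Longrightarrow> C j i = - C i j"
    and constraint: "\<And>k. k \<in> I \<Longrightarrow> (\<Sum>j\<in>nb k. Dp k j * P j - C k j \<bullet> U j) = 0"
  shows "(\<Sum>i\<in>I. U i \<bullet> (\<Sum>j\<in>nb i. (D i j - ((U i + U j) /\<^sub>R 2) \<bullet> C i j) *\<^sub>R U j - P j *\<^sub>R C i j))
       = - (\<Sum>i\<in>I. \<Sum>j\<in>nb i - {i}. D i j / 2 * (norm (U j - U i))\<^sup>2 + Dp i j / 2 * (P j - P i)\<^sup>2)"
proof -
  have C_skew': "C j i = - C i j" if "i \<in> I" "j \<in> nb i" for i j
    using C_skew sub that by blast
  define conv where "conv i j = ((U i + U j) /\<^sub>R 2) \<bullet> C i j * (U i \<bullet> U j)" for i j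
  define press where "press i j = P j * (U i \<bullet> C i j)" for i j
  have split: "(\<Sum>i\<in>I. U i \<bullet> (\<Sum>j\<in>nb i. (D i j - ((U i + U j) /\<^sub>R 2) \<bullet> C i j) *\<^sub>R U j - P j *\<^sub>R C i j))
      = (\<Sum>i\<in>I. \<Sum>j\<in>nb i. D i j * (U i \<bullet> U j)) - (\<Sum>i\<in>I. \<Sum>j\<in>nb i. conv i j)
        - (\<Sum>i\<in>I. \<Sum>j\<in>nb i. press i j)"
    unfolding conv_def press_def
    by (simp add: inner_sum_right inner_diff_right sum_subtractf sum.distrib algebra_simps)
  \<comment> \<open>the skew-symmetric convection term does no work\<close>
  have "(\<Sum>i\<in>I. \<Sum>j\<in>nb i. conv i j) = (\<Sum>i\<in>I. \<Sum>j\<in>nb i. conv j i)"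
    by (rule sum_sum_swap_symmetric[OF fin sub sym])
  also have "\<dots> = - (\<Sum>i\<in>I. \<Sum>j\<in>nb i. conv i j)"
    unfolding sum_negf[symmetric] using C_skew'
    by (intro sum.cong refl) (simp add: conv_def inner_commute add.commute)
  finally have conv_0: "(\<Sum>i\<in>I. \<Sum>j\<in>nb i. conv i j) = 0" by simp
  \<comment> \<open>the discrete constraint turns the pressure work into the \<open>Dp\<close>-quadratic form\<close>
  have "(\<Sum>i\<in>I. \<Sum>j\<in>nb i. press i j) = (\<Sum>i\<in>I. \<Sum>j\<in>nb i. press j i)"
    by (rule sum_sum_swap_symmetric[OF fin sub sym])
  also have "\<dots> = - (\<Sum>i\<in>I. P i * (\<Sum>j\<in>nb i. C i j \<bullet> U j))"
    unfolding sum_distrib_left sum_negf[symmetric] using C_skew'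
    by (intro sum.cong refl) (simp add: press_def inner_commute)
  also have "\<dots> = - (\<Sum>i\<in>I. P i * (\<Sum>j\<in>nb i. Dp i j * P j))"
    using constraint by (simp add: sum_subtractf)
  also have "\<dots> = - (\<Sum>i\<in>I. \<Sum>j\<in>nb i. Dp i j * (P i * P j))"
    by (simp add: sum_distrib_left algebra_simps)
  finally have press_eq: "(\<Sum>i\<in>I. \<Sum>j\<in>nb i. press i j)
      = (\<Sum>i\<in>I. \<Sum>j\<in>nb i. Dp i j / 2 * (norm (P j - P i))\<^sup>2)"
    using zero_row_sum_quadratic_form[OF fin sub sym Dp_sym Dp_row, of P] by simp
  have off_diag: "(\<Sum>j\<in>nb i - {i}. g j) = (\<Sum>j\<in>nb i. g j)" if "g i = 0" for i and g :: "'i \<Rightarrow> real"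
    using that finite_subset[OF sub fin] by (intro sum.mono_neutral_left) auto
  have visc: "(\<Sum>i\<in>I. \<Sum>j\<in>nb i. D i j * (U i \<bullet> U j))
      = - (\<Sum>i\<in>I. \<Sum>j\<in>nb i. D i j / 2 * (norm (U j - U i))\<^sup>2)"
    by (rule zero_row_sum_quadratic_form[OF fin sub sym D_sym D_row])
  show ?thesis
    unfolding split conv_0 press_eq visc by (simp add: off_diag sum.distrib sum_negf)
qed

section \<open>Affine functions, gradients and periodic functions on a box\<close>

definition affine_fun_on :: "'a::real_inner set \<Rightarrow> ('a \<Rightarrow> real) \<Rightarrow> bool" where
  "affine_fun_on S f \<longleftrightarrow> (\<exists>a b. \<forall>y\<in>S. f y = a \<bullet> y + b)"

lemma affine_fun_on_sum:
  assumes "finite J" and "\<And>j. j \<in> J \<Longrightarrow> affine_fun_on S (f j)"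
  shows "affine_fun_on S (\<lambda>y. \<Sum>j\<in>J. f j y)"
  using assms
proof (induction J rule: finite_induct)
  case empty
  show ?case unfolding affine_fun_on_def by (intro exI[of _ 0]) simp
next
  case (insert j J)
  obtain a b where ab: "\<forall>y\<in>S. f j y = a \<bullet> y + b"
    using insert.prems[of j] by (auto simp: affine_fun_on_def)
  obtain a' b' where ab': "\<forall>y\<in>S. (\<Sum>j\<in>J. f j y) = a' \<bullet> y + b'"
    using insert by (auto simp: affine_fun_on_def)
  show ?case unfolding affine_fun_on_def
    using insert.hyps ab ab' by (intro exI[of _ "a + a'"] exI[of _ "b + b'"]) (simp add: inner_add_left)
qed

lemma affine_fun_on_const_if_const_on_extreme_points:
  fixes S :: "'a::euclidean_space set"
  assumes "compact S" "convex S" and "affine_fun_on S f"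
    and "\<And>v. v extreme_point_of S \<Longrightarrow> f v = c" and "y \<in> S"
  shows "f y = c"
proof -
  obtain a b where f: "\<forall>y\<in>S. f y = a \<bullet> y + b"
    using assms(3) by (auto simp: affine_fun_on_def)
  have "{v. v extreme_point_of S} \<subseteq> {z. a \<bullet> z = c - b}"
  proof
    fix v assume "v \<in> {v. v extreme_point_of S}"
    then have "v \<in> S" "f v = c" using assms(4) by (auto simp: extreme_point_of_def)
    then show "v \<in> {z. a \<bullet> z = c - b}" using f by auto
  qed
  then have "convex hull {v. v extreme_point_of S} \<subseteq> {z. a \<bullet> z = c - b}"
    by (intro hull_minimal convex_hyperplane)
  then show ?thesis
    using Krein_Milman_Minkowski[OF assms(1,2)] assms(5) f by auto
qed

lemma has_derivative_affine_fun_on_interior: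
  fixes S :: "'a::euclidean_space set"
  assumes "y \<in> interior S" and "\<forall>z\<in>S. f z = a \<bullet> z + b"
  shows "(f has_derivative (\<lambda>h. a \<bullet> h)) (at y)"
proof (rule has_derivative_transform_within_open[OF _ open_interior assms(1)])
  show "((\<lambda>z. a \<bullet> z + b) has_derivative (\<lambda>h. a \<bullet> h)) (at y)"
    by (auto intro!: derivative_eq_intros)
  show "a \<bullet> z + b = f z" if "z \<in> interior S" for z
  proof -
    have "z \<in> S" using that interior_subset by blast
    then show ?thesis using assms(2) by simp
  qed
qed

lemma grad_eqI:
  fixes f :: "real^'d \<Rightarrow> real"
  assumes "(f has_derivative (\<lambda>h. a \<bullet> h)) (at y)"
  shows "grad f y = a"
  using frechet_derivative_at[OF assms, symmetric] by (simp add: grad_def vec_eq_iff inner_axis)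

lemma grad_eq_0_if_vanishing_on:
  fixes f :: "real^'d \<Rightarrow> real"
  assumes "y \<in> interior S" and "\<forall>z\<in>S. f z = 0"
  shows "grad f y = 0"
  using has_derivative_affine_fun_on_interior[OF assms(1), of f 0 0] assms(2) by (intro grad_eqI) simp

lemma dominated_convergence_cbox_ae:
  fixes f :: "nat \<Rightarrow> 'a::euclidean_space \<Rightarrow> real"
  assumes int: "\<And>n. f n integrable_on cbox a b"
    and bound: "\<And>n y. y \<in> cbox a b \<Longrightarrow> \<bar>f n y\<bar> \<le> B"
    and Z: "negligible Z"
    and lim: "\<And>y. y \<in> cbox a b \<Longrightarrow> y \<notin> Z \<Longrightarrow> (\<lambda>n. f n y) \<longlonglongrightarrow> F y"
  shows "F integrable_on cbox a b"
    and "(\<lambda>n. integral (cbox a b) (f n)) \<longlonglongrightarrow> integral (cbox a b) F"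
proof -
  define S where "S = cbox a b - Z"
  have neg1: "negligible {x \<in> cbox a b - S. g x \<noteq> 0}" for g :: "'a \<Rightarrow> real"
    by (rule negligible_subset[OF Z]) (auto simp: S_def)
  have neg2: "negligible {x \<in> S - cbox a b. g x \<noteq> 0}" for g :: "'a \<Rightarrow> real"
    by (rule negligible_subset[of "{}"]) (auto simp: S_def)
  have "f n integrable_on S" for n
    by (rule integrable_spike_set[OF int neg1 neg2])
  moreover have "(\<lambda>_. B) integrable_on S"
    by (rule integrable_spike_set[OF integrable_const neg1 neg2])
  ultimately have dc: "F integrable_on S" "(\<lambda>n. integral S (f n)) \<longlonglongrightarrow> integral S F"
    using dominated_convergence[of f S "\<lambda>_. B" F] bound lim by (auto simp: S_def)
  show "F integrable_on cbox a b"
    by (rule integrable_spike_set[OF dc(1) neg2 neg1])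
  have "integral S g = integral (cbox a b) g" for g :: "'a \<Rightarrow> real"
    by (rule integral_spike_set[OF neg2 neg1])
  then show "(\<lambda>n. integral (cbox a b) (f n)) \<longlonglongrightarrow> integral (cbox a b) F"
    using dc(2) by simp
qed

lemma difference_quotient_tendsto_component:
  fixes g :: "real^'d \<Rightarrow> real"
  assumes "(g has_derivative (\<lambda>v. G \<bullet> v)) (at y)" and "c > 0"
  shows "(\<lambda>n. (g (y + (c / Suc n) *\<^sub>R axis k 1) - g y) / (c / Suc n)) \<longlonglongrightarrow> G $ k"
proof -
  define q where "q t = g (y + t *\<^sub>R axis k 1)" for t
  have line: "((\<lambda>t::real. y + t *\<^sub>R axis k 1) has_derivative (\<lambda>t. t *\<^sub>R axis k 1)) (at 0)"
    by (auto intro!: derivative_eq_intros)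
  have "(g has_derivative (\<lambda>v. G \<bullet> v)) (at (y + 0 *\<^sub>R axis k 1))"
    using assms(1) by simp
  from has_derivative_compose[OF line this]
  have "(q has_derivative (\<lambda>t. G \<bullet> (t *\<^sub>R axis k 1))) (at 0)"
    unfolding q_def .
  then have "(q has_field_derivative G $ k) (at 0)"
    unfolding has_field_derivative_def
    by (rule has_derivative_eq_rhs) (auto simp: inner_axis mult.commute)
  then have lim: "((\<lambda>t. (q (0 + t) - q 0) / t) \<longlongrightarrow> G $ k) (at 0)"
    by (simp add: DERIV_def)
  have "(\<lambda>n. c * inverse (real (Suc n))) \<longlonglongrightarrow> c * 0"
    by (intro tendsto_intros LIMSEQ_inverse_real_of_nat)
  then have "filterlim (\<lambda>n. c / Suc n) (at 0) sequentially"
    using assms(2) by (auto simp: filterlim_at field_simps)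
  from filterlim_compose[OF lim this] show ?thesis by (simp add: q_def)
qed

lemma integral_cbox_split_cart:
  fixes g :: "real^'d \<Rightarrow> real"
  assumes "g integrable_on cbox a b" and "a$k \<le> c" "c \<le> b$k"
  shows "integral (cbox a b) g = integral (cbox a (\<chi> i. if i = k then c else b$i)) g
           + integral (cbox (\<chi> i. if i = k then c else a$i) b) g"
proof -
  have "cbox a b \<inter> {x. x \<bullet> axis k 1 \<le> c} = cbox a (\<chi> i. if i = k then c else b$i)"
    using assms(2,3) by (auto simp: mem_box_cart inner_axis) (smt (verit))+
  moreover have "cbox a b \<inter> {x. x \<bullet> axis k 1 \<ge> c} = cbox (\<chi> i. if i = k then c else a$i) b"
    using assms(2,3) by (auto simp: mem_box_cart inner_axis) (smt (verit))+
  ultimately show ?thesis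
    using integral_split[OF assms(1), of "axis k 1" c] by simp
qed

text \<open>Shifting by less than a period moves the slab of the box beyond the shift to the other end.\<close>
lemma integral_cbox_shift_periodic:
  fixes f :: "real^'d \<Rightarrow> real" and L :: "real^'d"
  assumes cont: "continuous_on UNIV f" and per: "\<And>y. f (y + L$k *\<^sub>R axis k 1) = f y"
    and L: "\<And>i. L$i \<ge> 0" and h: "0 \<le> h" "h \<le> L$k"
  shows "integral (cbox 0 L) (\<lambda>y. f (y + h *\<^sub>R axis k 1)) = integral (cbox 0 L) f"
proof -
  define e :: "real^'d" where "e = axis k 1"
  define upd :: "real^'d \<Rightarrow> real \<Rightarrow> real^'d" where "upd v c = (\<chi> i. if i = k then c else v$i)" for v c
  have integrable: "g integrable_on cbox a b" if "continuous_on UNIV g" for a b and g :: "real^'d \<Rightarrow> real"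
    using that by (intro integrable_continuous) (auto intro: continuous_on_subset)
  have cont_shift: "continuous_on UNIV (\<lambda>y. f (y + h *\<^sub>R e))"
    by (intro continuous_on_compose2[OF cont] continuous_intros) auto
  have "integral (cbox 0 L) (\<lambda>y. f (y + h *\<^sub>R e)) =
      integral (cbox 0 (upd L (L$k - h))) (\<lambda>y. f (y + h *\<^sub>R e))
      + integral (cbox (upd 0 (L$k - h)) L) (\<lambda>y. f (y + h *\<^sub>R e))"
    unfolding upd_def using h L by (intro integral_cbox_split_cart integrable[OF cont_shift]) auto
  also have "integral (cbox 0 (upd L (L$k - h))) (\<lambda>y. f (y + h *\<^sub>R e)) = integral (cbox (upd 0 h) L) f"
  proof -
    have "upd 0 h - h *\<^sub>R e = 0" "L - h *\<^sub>R e = upd L (L$k - h)"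
      by (simp_all add: vec_eq_iff upd_def e_def axis_def)
    then show ?thesis
      using integral_shift_cbox[of "upd 0 h" "h *\<^sub>R e" L f] by simp
  qed
  also have "integral (cbox (upd 0 (L$k - h)) L) (\<lambda>y. f (y + h *\<^sub>R e)) = integral (cbox 0 (upd L h)) f"
  proof -
    have "f (y + h *\<^sub>R e) = f (y + (h - L$k) *\<^sub>R e)" for y
      using per[of "y + (h - L$k) *\<^sub>R e"] by (simp add: e_def algebra_simps)
    moreover have "0 - (h - L$k) *\<^sub>R e = upd 0 (L$k - h)" "upd L h - (h - L$k) *\<^sub>R e = L"
      by (simp_all add: vec_eq_iff upd_def e_def axis_def)
    ultimately show ?thesis
      using integral_shift_cbox[of 0 "(h - L$k) *\<^sub>R e" "upd L h" f] by simp
  qed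
  also have "integral (cbox (upd 0 h) L) f + integral (cbox 0 (upd L h)) f = integral (cbox 0 L) f"
    unfolding upd_def using h L by (subst integral_cbox_split_cart[OF integrable[OF cont], of 0 k h L]) auto
  finally show ?thesis by (simp add: e_def)
qed

lemma has_real_derivative_affine_on_compact_convex:
  fixes J :: "real set"
  assumes "compact J" "convex J" and "\<forall>s\<in>J. f s = \<alpha> * s + \<beta>"
    and "t \<in> J" "t \<noteq> Inf J" "t \<noteq> Sup J"
  shows "(f has_real_derivative \<alpha>) (at t)"
proof -
  have bdd: "bdd_below J" "bdd_above J"
    using compact_imp_bounded[OF assms(1)] by (simp_all add: bounded_imp_bdd_below bounded_imp_bdd_above)
  have ends: "Inf J \<in> J" "Sup J \<in> J"
    using closed_contains_Inf[OF _ bdd(1)] closed_contains_Sup[OF _ bdd(2)]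
      compact_imp_closed[OF assms(1)] assms(4) by blast+
  have "Inf J \<le> t" "t \<le> Sup J" using cInf_lower[OF assms(4) bdd(1)] cSup_upper[OF assms(4) bdd(2)] .
  then have t: "t \<in> {Inf J<..<Sup J}" using assms(5,6) by simp
  have sub: "s \<in> J" if "s \<in> {Inf J<..<Sup J}" for s
    using assms(2) ends that unfolding is_interval_convex_1[symmetric] is_interval_1
    by (meson greaterThanLessThan_iff less_imp_le)
  have "((\<lambda>s. \<alpha> * s + \<beta>) has_real_derivative \<alpha>) (at t)"
    by (auto intro!: derivative_eq_intros)
  then show ?thesis
    by (rule has_field_derivative_transform_within_open[OF _ open_greaterThanLessThan t])
       (use sub assms(3) in simp)
qed

lemma increment_bound_piecewise_affine:
  fixes f :: "real \<Rightarrow> real"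
  assumes "a \<le> b" and cont: "continuous_on {a..b} f" and fin: "finite \<J>"
    and cover: "{a..b} \<subseteq> \<Union>\<J>"
    and pieces: "\<And>J. J \<in> \<J> \<Longrightarrow> compact J \<and> convex J"
    and slopes: "\<And>J. J \<in> \<J> \<Longrightarrow> \<exists>\<alpha> \<beta>. \<bar>\<alpha>\<bar> \<le> M \<and> (\<forall>s\<in>J. f s = \<alpha> * s + \<beta>)"
  shows "\<bar>f b - f a\<bar> \<le> M * (b - a)"
proof -
  obtain J0 where "J0 \<in> \<J>" using cover \<open>a \<le> b\<close> by auto
  then have M: "0 \<le> M" using slopes by fastforce
  \<comment> \<open>away from the finitely many endpoints of the pieces, \<open>f\<close> is locally affine\<close>
  define K where "K = {a, b} \<union> (\<Union>J\<in>\<J>. {Inf J, Sup J})"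
  have "finite K" unfolding K_def using fin by auto
  have deriv: "\<exists>\<alpha>. \<bar>\<alpha>\<bar> \<le> M \<and> (f has_real_derivative \<alpha>) (at t)" if t: "t \<in> {a<..<b} - K" for t
  proof -
    have "t \<in> {a..b}" using t by auto
    then have "t \<in> \<Union>\<J>" by (rule subsetD[OF cover])
    then obtain J where J: "J \<in> \<J>" "t \<in> J" by blast
    obtain \<alpha> \<beta> where "\<bar>\<alpha>\<bar> \<le> M" and "\<forall>s\<in>J. f s = \<alpha> * s + \<beta>"
      using slopes[OF J(1)] by blast
    moreover have "t \<noteq> Inf J" "t \<noteq> Sup J" using t J(1) unfolding K_def by blast+
    ultimately show ?thesis
      using pieces[OF J(1)] J(2) has_real_derivative_affine_on_compact_convex by blast
  qed
  define D where "D t = (if t \<in> {a<..<b} - K then deriv f t else 0)" for t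
  have "(D has_integral (f b - f a)) {a..b}"
  proof (rule fundamental_theorem_of_calculus_interior_strong[OF \<open>finite K\<close> \<open>a \<le> b\<close> _ cont])
    fix t assume t: "t \<in> {a<..<b} - K"
    with deriv obtain \<alpha> where "(f has_real_derivative \<alpha>) (at t)" by blast
    then show "(f has_vector_derivative D t) (at t)"
      using t by (simp add: D_def DERIV_imp_deriv has_real_derivative_iff_has_vector_derivative[symmetric])
  qed
  moreover have "norm (D t) \<le> M" for t
  proof (cases "t \<in> {a<..<b} - K")
    case True
    with deriv obtain \<alpha> where "\<bar>\<alpha>\<bar> \<le> M" "(f has_real_derivative \<alpha>) (at t)" by blast
    then show ?thesis using True by (simp add: D_def DERIV_imp_deriv)
  next
    case False
    then have "D t = 0" unfolding D_def by (rule if_not_P)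
    then show ?thesis using M by simp
  qed
  ultimately show ?thesis
    using has_integral_bound[OF M, of D "f b - f a" a b] \<open>a \<le> b\<close> by (simp add: content_real)
qed

text \<open>The difference quotients of \<open>g\<close> integrate to zero by periodicity and converge
dominatedly to \<open>G y $ k\<close>.\<close>
lemma integral_cbox_partial_derivative_periodic_eq_0:
  fixes g :: "real^'d \<Rightarrow> real" and G :: "real^'d \<Rightarrow> real^'d"
  assumes L: "\<And>i. L$i > 0" and cont: "continuous_on UNIV g"
    and per: "\<And>y. g (y + L$k *\<^sub>R axis k 1) = g y"
    and incr: "\<And>y h. y \<in> cbox 0 L \<Longrightarrow> h \<in> {0..1} \<Longrightarrow> \<bar>g (y + h *\<^sub>R axis k 1) - g y\<bar> \<le> M * h"
    and Z: "negligible Z" and deriv: "\<And>y. y \<notin> Z \<Longrightarrow> (g has_derivative (\<lambda>v. G y \<bullet> v)) (at y)"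
  shows "integral (cbox 0 L) (\<lambda>y. G y $ k) = 0"
proof -
  define c where "c = min 1 (L$k)"
  define h where "h n = c / Suc n" for n
  define q where "q n y = (g (y + h n *\<^sub>R axis k 1) - g y) / h n" for n y
  have c: "0 < c" using L by (simp add: c_def)
  have h_le: "h n \<le> c" for n
    using c by (simp add: h_def divide_le_eq)
  have h: "0 < h n" "h n \<le> 1" "h n \<le> L$k" for n
    using c h_le[of n] by (auto simp: h_def c_def)
  have cont_shift: "continuous_on UNIV (\<lambda>y. g (y + h n *\<^sub>R axis k 1))" for n
    by (intro continuous_on_compose2[OF cont] continuous_intros) auto
  have q_integrable: "q n integrable_on cbox 0 L" for n
    unfolding q_def by (intro integrable_continuous continuous_intros continuous_on_subset[OF cont_shift]
      continuous_on_subset[OF cont]) (use h(1)[of n] in auto)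
  have "integral (cbox 0 L) (q n) = 0" for n
  proof -
    have "integral (cbox 0 L) (\<lambda>y. g (y + h n *\<^sub>R axis k 1)) = integral (cbox 0 L) g"
      using L h[of n] by (intro integral_cbox_shift_periodic cont per) (auto intro: less_imp_le)
    moreover have "(\<lambda>y. g (y + h n *\<^sub>R axis k 1)) integrable_on cbox 0 L" "g integrable_on cbox 0 L"
      by (auto intro!: integrable_continuous intro: continuous_on_subset[OF cont_shift] continuous_on_subset[OF cont])
    ultimately show ?thesis
      unfolding q_def by (simp add: integral_diff)
  qed
  moreover have "(\<lambda>n. integral (cbox 0 L) (q n)) \<longlonglongrightarrow> integral (cbox 0 L) (\<lambda>y. G y $ k)"
  proof (rule dominated_convergence_cbox_ae(2)[OF q_integrable _ Z])
    show "\<bar>q n y\<bar> \<le> M" if "y \<in> cbox 0 L" for n y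
      using incr[OF that, of "h n"] h[of n] by (simp add: q_def abs_divide pos_divide_le_eq)
    show "(\<lambda>n. q n y) \<longlonglongrightarrow> G y $ k" if "y \<notin> Z" for y
      using difference_quotient_tendsto_component[OF deriv[OF that] c] by (simp add: q_def h_def)
  qed
  ultimately show ?thesis by (simp add: LIMSEQ_const_iff)
qed

lemma lattice_add: "a \<in> lattice L \<Longrightarrow> b \<in> lattice L \<Longrightarrow> a + b \<in> lattice L"
proof (unfold lattice_def, intro CollectI allI)
  fix k
  assume "a \<in> {z. \<forall>k. \<exists>n::int. z$k = of_int n * L$k}" "b \<in> {z. \<forall>k. \<exists>n::int. z$k = of_int n * L$k}"
  then obtain n m :: int where "a$k = of_int n * L$k" "b$k = of_int m * L$k" by blast
  then show "\<exists>n::int. (a + b)$k = of_int n * L$k"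
    by (intro exI[of _ "n + m"]) (simp add: algebra_simps)
qed

lemma lattice_uminus: "a \<in> lattice L \<Longrightarrow> - a \<in> lattice L"
proof (unfold lattice_def, intro CollectI allI)
  fix k
  assume "a \<in> {z. \<forall>k. \<exists>n::int. z$k = of_int n * L$k}"
  then obtain n :: int where "a$k = of_int n * L$k" by blast
  then show "\<exists>n::int. (- a)$k = of_int n * L$k"
    by (intro exI[of _ "- n"]) simp
qed

lemma lattice_add_left_iff:
  assumes "z \<in> lattice L"
  shows "z + p \<in> lattice L \<longleftrightarrow> p \<in> lattice L"
proof
  assume "z + p \<in> lattice L"
  then have "(z + p) + - z \<in> lattice L" using lattice_add lattice_uminus[OF assms] by blast
  then show "p \<in> lattice L" by simp
qed (rule lattice_add[OF assms])

lemma scaleR_axis_in_lattice: "(L$k) *\<^sub>R axis k 1 \<in> lattice L"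
proof (unfold lattice_def, intro CollectI allI)
  fix j
  show "\<exists>n::int. ((L$k) *\<^sub>R axis k 1)$j = of_int n * L$j"
    by (cases "j = k") (auto simp: axis_def intro: exI[of _ 1] exI[of _ 0])
qed

lemma convex_line_vimage:
  fixes S :: "'a::real_vector set"
  assumes "convex S"
  shows "convex ((\<lambda>t::real. y + t *\<^sub>R e) -` S)"
proof (rule convexI)
  fix s t u v :: real
  assume st: "s \<in> (\<lambda>t. y + t *\<^sub>R e) -` S" "t \<in> (\<lambda>t. y + t *\<^sub>R e) -` S"
    and uv: "0 \<le> u" "0 \<le> v" "u + v = 1"
  have "u *\<^sub>R (y + s *\<^sub>R e) + v *\<^sub>R (y + t *\<^sub>R e) = (u + v) *\<^sub>R y + (u * s + v * t) *\<^sub>R e"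
    by (simp add: algebra_simps)
  then have "y + (u *\<^sub>R s + v *\<^sub>R t) *\<^sub>R e = u *\<^sub>R (y + s *\<^sub>R e) + v *\<^sub>R (y + t *\<^sub>R e)"
    using uv(3) by simp
  then show "u *\<^sub>R s + v *\<^sub>R t \<in> (\<lambda>t. y + t *\<^sub>R e) -` S"
    using convexD[OF assms _ _ uv] st by simp
qed

section \<open>The P1 basis on a periodic mesh\<close>

locale periodic_P1_basis =
  fixes L :: "real^'d" and Th :: "(real^'d) set set" and N :: nat
    and x :: "nat \<Rightarrow> real^'d" and \<phi> :: "nat \<Rightarrow> real^'d \<Rightarrow> real"
  assumes L_pos: "\<forall>k. L$k > 0" and mesh: "periodic_mesh L Th" and basis: "P1_nodal_basis L Th N x \<phi>"
begin

lemma cell_compact: "S \<in> Th \<Longrightarrow> compact S"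
  and cell_convex: "S \<in> Th \<Longrightarrow> convex S"
proof -
  assume "S \<in> Th"
  then have "int CARD('d) simplex S" using mesh by (auto simp: periodic_mesh_def)
  then obtain C where "finite C" "S = convex hull C" by (auto simp: simplex)
  then show "compact S" "convex S" by (simp_all add: compact_convex_hull finite_imp_compact)
qed

lemma mesh_covers: "\<exists>S\<in>Th. y \<in> S"
  using mesh by (auto simp: periodic_mesh_def)

lemma mesh_locally_finite: "bounded B \<Longrightarrow> finite {S\<in>Th. S \<inter> B \<noteq> {}}"
  using mesh by (auto simp: periodic_mesh_def)

lemma cell_translate: "S \<in> Th \<Longrightarrow> z \<in> lattice L \<Longrightarrow> (\<lambda>y. z + y) ` S \<in> Th"
  using mesh by (auto simp: periodic_mesh_def)

lemma phi_affine_on_cell: "i \<in> {1..N} \<Longrightarrow> S \<in> Th \<Longrightarrow> affine_fun_on S (\<phi> i)"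
  using basis by (auto simp: P1_nodal_basis_def affine_fun_on_def)

lemma phi_continuous: "i \<in> {1..N} \<Longrightarrow> continuous_on UNIV (\<phi> i)"
  using basis by (auto simp: P1_nodal_basis_def)

lemma phi_at_vertex:
  assumes "S \<in> Th" "v extreme_point_of S" "i \<in> {1..N}"
  shows "\<phi> i v = (if v - x i \<in> lattice L then 1 else 0)"
proof -
  have "v \<in> mesh_vertices Th" unfolding mesh_vertices_def using assms by blast
  then show ?thesis using basis assms(3) unfolding P1_nodal_basis_def by blast
qed

lemma vertex_class_unique:
  assumes "S \<in> Th" "v extreme_point_of S"
  shows "\<exists>!i. i \<in> {1..N} \<and> v - x i \<in> lattice L"
proof -
  have "v \<in> mesh_vertices Th" unfolding mesh_vertices_def using assms by blast
  then show ?thesis using basis unfolding P1_nodal_basis_def by blast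
qed

lemma phi_partition_of_unity: "(\<Sum>j\<in>{1..N}. \<phi> j y) = 1"
proof -
  obtain S where S: "S \<in> Th" "y \<in> S" using mesh_covers by blast
  have "(\<Sum>j\<in>{1..N}. \<phi> j v) = 1" if v: "v extreme_point_of S" for v
  proof -
    obtain i0 where i0: "i0 \<in> {1..N}" "v - x i0 \<in> lattice L"
      and unique: "\<And>j. j \<in> {1..N} \<Longrightarrow> v - x j \<in> lattice L \<Longrightarrow> j = i0"
      using vertex_class_unique[OF S(1) v] by blast
    have "\<phi> j v = (if j = i0 then 1 else 0)" if "j \<in> {1..N}" for j
      unfolding phi_at_vertex[OF S(1) v that] using unique[OF that] i0(2) by metis
    then have "(\<Sum>j\<in>{1..N}. \<phi> j v) = (\<Sum>j\<in>{1..N}. if j = i0 then 1 else 0)"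
      by (intro sum.cong) auto
    then show ?thesis using i0(1) by simp
  qed
  moreover have "affine_fun_on S (\<lambda>y. \<Sum>j\<in>{1..N}. \<phi> j y)"
    using phi_affine_on_cell[OF _ S(1)] by (intro affine_fun_on_sum) auto
  ultimately show ?thesis
    using affine_fun_on_const_if_const_on_extreme_points[OF cell_compact[OF S(1)] cell_convex[OF S(1)]] S(2)
    by blast
qed

definition skeleton :: "(real^'d) set" where
  "skeleton = \<Union>(frontier ` Th)"

lemma negligible_skeleton: "negligible skeleton"
proof -
  define G where "G n = \<Union>(frontier ` {S\<in>Th. S \<inter> cball 0 (real n) \<noteq> {}})" for n :: nat
  have "negligible (G n)" for n
    unfolding G_def
    by (intro negligible_Union finite_imageI mesh_locally_finite bounded_cball)
       (auto intro!: negligible_convex_frontier cell_convex)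
  then have "negligible (\<Union>n. G n)" by (rule negligible_Union_nat)
  moreover have "skeleton \<subseteq> (\<Union>n. G n)"
  proof
    fix y assume "y \<in> skeleton"
    then obtain S where S: "S \<in> Th" "y \<in> frontier S" by (auto simp: skeleton_def)
    then have "y \<in> S"
      using cell_compact[OF S(1)] frontier_subset_closed compact_imp_closed by blast
    moreover have "y \<in> cball 0 (real (nat \<lceil>norm y\<rceil>))" by (simp add: real_nat_ceiling_ge)
    ultimately show "y \<in> (\<Union>n. G n)" using S unfolding G_def by blast
  qed
  ultimately show ?thesis by (rule negligible_subset)
qed

lemma interior_cell_if_not_in_skeleton:
  assumes "y \<notin> skeleton"
  obtains S where "S \<in> Th" "y \<in> interior S"
proof -
  obtain S where S: "S \<in> Th" "y \<in> S" using mesh_covers by blast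
  have "y \<notin> frontier S" using assms S by (auto simp: skeleton_def)
  moreover have "closure S = S" using cell_compact[OF S(1)] by (simp add: compact_imp_closed)
  ultimately show ?thesis using S that by (auto simp: frontier_def)
qed

lemma phi_has_derivative:
  assumes "y \<notin> skeleton" "i \<in> {1..N}"
  shows "(\<phi> i has_derivative (\<lambda>h. grad (\<phi> i) y \<bullet> h)) (at y)"
proof -
  obtain S where S: "S \<in> Th" "y \<in> interior S" using interior_cell_if_not_in_skeleton[OF assms(1)] .
  obtain a b where "\<forall>z\<in>S. \<phi> i z = a \<bullet> z + b"
    using phi_affine_on_cell[OF assms(2) S(1)] by (auto simp: affine_fun_on_def)
  from has_derivative_affine_fun_on_interior[OF S(2) this]
  show ?thesis using grad_eqI by metis
qed

lemma sum_grad_phi_eq_0: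
  assumes "y \<notin> skeleton"
  shows "(\<Sum>j\<in>{1..N}. grad (\<phi> j) y) = 0"
proof -
  define G where "G = (\<Sum>j\<in>{1..N}. grad (\<phi> j) y)"
  have "((\<lambda>z. \<Sum>j\<in>{1..N}. \<phi> j z) has_derivative (\<lambda>h. \<Sum>j\<in>{1..N}. grad (\<phi> j) y \<bullet> h)) (at y)"
    using phi_has_derivative[OF assms] by (intro has_derivative_sum) auto
  then have "((\<lambda>z. 1) has_derivative (\<lambda>h. G \<bullet> h)) (at y)"
    unfolding phi_partition_of_unity by (simp add: G_def inner_sum_left)
  from has_derivative_unique[OF this has_derivative_const] have "G \<bullet> G = 0" by meson
  then show ?thesis by (simp add: G_def)
qed

text \<open>If the supports of \<open>\<phi> i\<close> and \<open>\<phi> j\<close> are disjoint but both functions were nonzero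
somewhere on the same cell, they would both be nonzero at the midpoint of a suitable segment,
since they are affine there.\<close>
lemma phi_vanishes_on_cell_if_not_nbhd:
  assumes i: "i \<in> {1..N}" and j: "j \<in> {1..N}" and nj: "j \<notin> nbhd N \<phi> i" and S: "S \<in> Th"
    and z: "z \<in> S" "\<phi> i z \<noteq> 0" and w: "w \<in> S"
  shows "\<phi> j w = 0"
proof (rule ccontr)
  assume jw: "\<phi> j w \<noteq> 0"
  obtain a b where ab: "\<forall>y\<in>S. \<phi> i y = a \<bullet> y + b"
    using phi_affine_on_cell[OF i S] by (auto simp: affine_fun_on_def)
  obtain a' b' where ab': "\<forall>y\<in>S. \<phi> j y = a' \<bullet> y + b'"
    using phi_affine_on_cell[OF j S] by (auto simp: affine_fun_on_def)
  define m where "m = (1/2::real) *\<^sub>R z + (1/2::real) *\<^sub>R w"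
  have "m \<in> S" using cell_convex[OF S] z w unfolding m_def by (intro convexD) auto
  then have mid: "\<phi> i m = (\<phi> i z + \<phi> i w) / 2" "\<phi> j m = (\<phi> j z + \<phi> j w) / 2"
    using ab ab' z w by (simp_all add: m_def inner_add_right algebra_simps)
  have "\<exists>y. \<phi> i y \<noteq> 0 \<and> \<phi> j y \<noteq> 0"
  proof (cases "\<phi> i w = 0 \<and> \<phi> j z = 0")
    case True
    then show ?thesis using mid z(2) jw by (intro exI[of _ m]) auto
  next
    case False
    then show ?thesis using z(2) jw by blast
  qed
  then show False using j nj by (simp add: nbhd_def)
qed

lemma grad_phi_inner_sum_nbhd_eq_0:
  assumes y: "y \<notin> skeleton" and i: "i \<in> {1..N}"
  shows "grad (\<phi> i) y \<bullet> (\<Sum>j\<in>nbhd N \<phi> i. grad (\<phi> j) y) = 0"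
proof -
  obtain S where S: "S \<in> Th" "y \<in> interior S" using interior_cell_if_not_in_skeleton[OF y] .
  show ?thesis
  proof (cases "\<exists>z\<in>S. \<phi> i z \<noteq> 0")
    case True
    then obtain z where z: "z \<in> S" "\<phi> i z \<noteq> 0" by blast
    have "(\<Sum>j\<in>nbhd N \<phi> i. grad (\<phi> j) y) = (\<Sum>j\<in>{1..N}. grad (\<phi> j) y)"
    proof (rule sum.mono_neutral_left)
      show "nbhd N \<phi> i \<subseteq> {1..N}" by (auto simp: nbhd_def)
      show "\<forall>j\<in>{1..N} - nbhd N \<phi> i. grad (\<phi> j) y = 0"
        using phi_vanishes_on_cell_if_not_nbhd[OF i _ _ S(1) z] grad_eq_0_if_vanishing_on[OF S(2)] by blast
    qed simp
    then show ?thesis using sum_grad_phi_eq_0[OF y] by simp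
  next
    case False
    then have "grad (\<phi> i) y = 0" using grad_eq_0_if_vanishing_on[OF S(2)] by blast
    then show ?thesis by simp
  qed
qed

lemma phi_periodic:
  assumes i: "i \<in> {1..N}" and z: "z \<in> lattice L"
  shows "\<phi> i (y + z) = \<phi> i y"
proof -
  obtain S where S: "S \<in> Th" "y \<in> S" using mesh_covers by blast
  define S' where "S' = (\<lambda>w. z + w) ` S"
  have S': "S' \<in> Th" unfolding S'_def by (rule cell_translate[OF S(1) z])
  obtain a b where ab: "\<forall>w\<in>S. \<phi> i w = a \<bullet> w + b"
    using phi_affine_on_cell[OF i S(1)] by (auto simp: affine_fun_on_def)
  obtain a' b' where ab': "\<forall>w\<in>S'. \<phi> i w = a' \<bullet> w + b'"
    using phi_affine_on_cell[OF i S'] by (auto simp: affine_fun_on_def)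
  have "affine_fun_on S (\<lambda>w. \<phi> i (w + z) - \<phi> i w)"
    unfolding affine_fun_on_def
  proof (intro exI ballI)
    fix w assume w: "w \<in> S"
    then have "w + z \<in> S'" by (auto simp: S'_def add.commute)
    then show "\<phi> i (w + z) - \<phi> i w = (a' - a) \<bullet> w + (a' \<bullet> z + b' - b)"
      using ab' ab w by (simp add: inner_diff_left inner_add_right)
  qed
  moreover have "\<phi> i (v + z) - \<phi> i v = 0" if v: "v extreme_point_of S" for v
  proof -
    have "(z + v) extreme_point_of S'"
      unfolding S'_def using v by (simp add: extreme_point_of_translation_eq)
    then have "\<phi> i (z + v) = (if z + v - x i \<in> lattice L then 1 else 0)"
      by (rule phi_at_vertex[OF S' _ i])
    moreover have "z + v - x i \<in> lattice L \<longleftrightarrow> v - x i \<in> lattice L"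
      using lattice_add_left_iff[OF z, of "v - x i"] by (simp add: algebra_simps)
    ultimately show ?thesis by (simp add: phi_at_vertex[OF S(1) v i] add.commute)
  qed
  ultimately have "\<phi> i (y + z) - \<phi> i y = 0"
    by (rule affine_fun_on_const_if_const_on_extreme_points[OF cell_compact[OF S(1)] cell_convex[OF S(1)] _ _ S(2)])
  then show ?thesis by simp
qed

lemma shift_in_cball:
  assumes "y \<in> cbox 0 L" "h \<in> {0..1}"
  shows "y + h *\<^sub>R axis k 1 \<in> cball 0 (norm L + 1)"
proof -
  have "norm y \<le> norm L"
    by (rule norm_le_componentwise_cart)
       (use assms(1) L_pos in \<open>auto simp: mem_box_cart intro: order_trans[OF _ abs_ge_self]\<close>)
  moreover have "norm (y + h *\<^sub>R axis k 1) \<le> norm y + norm (h *\<^sub>R axis k (1::real))"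
    by (rule norm_triangle_ineq)
  moreover have "norm (h *\<^sub>R axis k (1::real)) \<le> 1" using assms(2) by simp
  ultimately show ?thesis by simp
qed

lemma phi_bounded_near_box:
  assumes "i \<in> {1..N}"
  obtains C where "\<And>y h. y \<in> cbox 0 L \<Longrightarrow> h \<in> {0..1} \<Longrightarrow> \<bar>\<phi> i (y + h *\<^sub>R axis k 1)\<bar> \<le> C"
proof -
  obtain C where C: "\<And>z. z \<in> cball 0 (norm L + 1) \<Longrightarrow> norm (\<phi> i z) \<le> C"
    using continuous_on_compact_bound[OF compact_cball continuous_on_subset[OF phi_continuous[OF assms]]]
    by blast
  show ?thesis
  proof (rule that)
    fix y :: "real^'d" and h :: real
    assume "y \<in> cbox 0 L" "h \<in> {0..1}"
    from C[OF shift_in_cball[OF this]] show "\<bar>\<phi> i (y + h *\<^sub>R axis k 1)\<bar> \<le> C" by simp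
  qed
qed

lemma cell_line_section_compact_convex:
  assumes "S \<in> Th"
  shows "compact ({0..h} \<inter> (\<lambda>t. y + t *\<^sub>R e) -` S) \<and> convex ({0..h} \<inter> (\<lambda>t::real. y + t *\<^sub>R e) -` S)"
proof -
  have "closed ((\<lambda>t. y + t *\<^sub>R e) -` S)"
    using cell_compact[OF assms] by (intro continuous_closed_vimage) (auto intro!: continuous_intros compact_imp_closed)
  moreover have "convex ((\<lambda>t. y + t *\<^sub>R e) -` S)"
    by (rule convex_line_vimage[OF cell_convex[OF assms]])
  ultimately show ?thesis by (auto intro: convex_Int)
qed

text \<open>The slopes of \<open>\<phi> i\<close> on the finitely many cells near the box bound its increments along
every coordinate direction.\<close>
lemma phi_increment_bound:
  assumes i: "i \<in> {1..N}"
  obtains M where "\<And>y h. y \<in> cbox 0 L \<Longrightarrow> h \<in> {0..1} \<Longrightarrow> \<bar>\<phi> i (y + h *\<^sub>R axis k 1) - \<phi> i y\<bar> \<le> M * h"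
proof -
  define e :: "real^'d" where "e = axis k 1"
  define F where "F = {S\<in>Th. S \<inter> cball 0 (norm L + 1) \<noteq> {}}"
  have "finite F" unfolding F_def by (rule mesh_locally_finite) simp
  obtain A c where Ac: "\<And>S w. S \<in> Th \<Longrightarrow> w \<in> S \<Longrightarrow> \<phi> i w = A S \<bullet> w + c S"
    using phi_affine_on_cell[OF i] unfolding affine_fun_on_def by metis
  define M where "M = (\<Sum>S\<in>F. norm (A S))"
  have "\<bar>\<phi> i (y + h *\<^sub>R e) - \<phi> i y\<bar> \<le> M * h" if y: "y \<in> cbox 0 L" and h: "h \<in> {0..1}" for y h
  proof -
    define J where "J S = {0..h} \<inter> (\<lambda>t. y + t *\<^sub>R e) -` S" for S
    have "\<bar>\<phi> i (y + h *\<^sub>R e) - \<phi> i (y + 0 *\<^sub>R e)\<bar> \<le> M * (h - 0)"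
    proof (rule increment_bound_piecewise_affine[where \<J> = "J ` F"])
      show "0 \<le> h" using h by simp
      show "continuous_on {0..h} (\<lambda>t. \<phi> i (y + t *\<^sub>R e))"
        by (intro continuous_on_compose2[OF phi_continuous[OF i]] continuous_intros) auto
      show "finite (J ` F)" using \<open>finite F\<close> by simp
      show "{0..h} \<subseteq> \<Union>(J ` F)"
      proof
        fix t assume t: "t \<in> {0..h}"
        obtain S where "S \<in> Th" "y + t *\<^sub>R e \<in> S" using mesh_covers by blast
        moreover have "y + t *\<^sub>R e \<in> cball 0 (norm L + 1)"
          unfolding e_def using t h by (intro shift_in_cball[OF y]) auto
        ultimately have "S \<in> F" "t \<in> J S" using t by (auto simp: F_def J_def)
        then show "t \<in> \<Union>(J ` F)" by blast
      qed
      show "compact J' \<and> convex J'" if "J' \<in> J ` F" for J'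
        using that cell_line_section_compact_convex unfolding F_def J_def by blast
      show "\<exists>\<alpha> \<beta>. \<bar>\<alpha>\<bar> \<le> M \<and> (\<forall>s\<in>J'. \<phi> i (y + s *\<^sub>R e) = \<alpha> * s + \<beta>)" if J': "J' \<in> J ` F" for J'
      proof -
        obtain S where S: "S \<in> F" "J' = J S" using J' by blast
        have "\<bar>A S \<bullet> e\<bar> \<le> norm (A S) * norm e" by (rule Cauchy_Schwarz_ineq2)
        also have "\<dots> = norm (A S)" by (simp add: e_def)
        also have "\<dots> \<le> M"
          unfolding M_def by (rule member_le_sum[OF S(1) _ \<open>finite F\<close>]) simp
        finally have "\<bar>A S \<bullet> e\<bar> \<le> M" .
        moreover have "\<forall>s\<in>J'. \<phi> i (y + s *\<^sub>R e) = (A S \<bullet> e) * s + (A S \<bullet> y + c S)"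
          using S Ac by (auto simp: F_def J_def inner_add_right)
        ultimately show ?thesis by blast
      qed
    qed
    then show ?thesis by simp
  qed
  then show ?thesis using that unfolding e_def by blast
qed

lemma phi_mult_increment_bound:
  assumes i: "i \<in> {1..N}" and j: "j \<in> {1..N}"
  obtains M where "\<And>y h. y \<in> cbox 0 L \<Longrightarrow> h \<in> {0..1} \<Longrightarrow>
    \<bar>\<phi> i (y + h *\<^sub>R axis k 1) * \<phi> j (y + h *\<^sub>R axis k 1) - \<phi> i y * \<phi> j y\<bar> \<le> M * h"
proof -
  define e :: "real^'d" where "e = axis k 1"
  obtain Mi where Mi: "\<And>y h. y \<in> cbox 0 L \<Longrightarrow> h \<in> {0..1} \<Longrightarrow> \<bar>\<phi> i (y + h *\<^sub>R e) - \<phi> i y\<bar> \<le> Mi * h"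
    using phi_increment_bound[OF i] unfolding e_def by blast
  obtain Mj where Mj: "\<And>y h. y \<in> cbox 0 L \<Longrightarrow> h \<in> {0..1} \<Longrightarrow> \<bar>\<phi> j (y + h *\<^sub>R e) - \<phi> j y\<bar> \<le> Mj * h"
    using phi_increment_bound[OF j] unfolding e_def by blast
  obtain Ci where Ci: "\<And>y h. y \<in> cbox 0 L \<Longrightarrow> h \<in> {0..1} \<Longrightarrow> \<bar>\<phi> i (y + h *\<^sub>R e)\<bar> \<le> Ci"
    using phi_bounded_near_box[OF i] unfolding e_def by blast
  obtain Cj where Cj: "\<And>y h. y \<in> cbox 0 L \<Longrightarrow> h \<in> {0..1} \<Longrightarrow> \<bar>\<phi> j (y + h *\<^sub>R e)\<bar> \<le> Cj"
    using phi_bounded_near_box[OF j] unfolding e_def by blast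
  have "\<bar>\<phi> i (y + h *\<^sub>R e) * \<phi> j (y + h *\<^sub>R e) - \<phi> i y * \<phi> j y\<bar> \<le> (Ci * Mj + Cj * Mi) * h"
    if y: "y \<in> cbox 0 L" and h: "h \<in> {0..1}" for y h
  proof -
    have Cj': "\<bar>\<phi> j y\<bar> \<le> Cj" using Cj[OF y, of 0] by simp
    have "\<phi> i (y + h *\<^sub>R e) * \<phi> j (y + h *\<^sub>R e) - \<phi> i y * \<phi> j y
        = \<phi> i (y + h *\<^sub>R e) * (\<phi> j (y + h *\<^sub>R e) - \<phi> j y) + \<phi> j y * (\<phi> i (y + h *\<^sub>R e) - \<phi> i y)"
      by (simp add: algebra_simps)
    also have "\<bar>\<dots>\<bar> \<le> \<bar>\<phi> i (y + h *\<^sub>R e)\<bar> * \<bar>\<phi> j (y + h *\<^sub>R e) - \<phi> j y\<bar> + \<bar>\<phi> j y\<bar> * \<bar>\<phi> i (y + h *\<^sub>R e) - \<phi> i y\<bar>"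
      by (simp add: abs_mult[symmetric] abs_triangle_ineq)
    also have "\<dots> \<le> Ci * (Mj * h) + Cj * (Mi * h)"
      using Ci[OF y h] Cj' Mi[OF y h] Mj[OF y h]
      by (intro add_mono mult_mono) (auto intro: order_trans[OF abs_ge_zero])
    finally show ?thesis by (simp add: algebra_simps)
  qed
  then show ?thesis using that unfolding e_def by blast
qed

definition diff_quot :: "nat \<Rightarrow> 'd \<Rightarrow> nat \<Rightarrow> real^'d \<Rightarrow> real" where
  "diff_quot i k n y = (\<phi> i (y + (1 / Suc n) *\<^sub>R axis k 1) - \<phi> i y) / (1 / Suc n)"

lemma diff_quot_continuous: "i \<in> {1..N} \<Longrightarrow> continuous_on UNIV (diff_quot i k n)"
  unfolding diff_quot_def[abs_def]
  by (intro continuous_intros continuous_on_compose2[OF phi_continuous] phi_continuous) auto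

lemma diff_quot_bounded:
  assumes "i \<in> {1..N}"
  obtains M where "\<And>n y. y \<in> cbox 0 L \<Longrightarrow> \<bar>diff_quot i k n y\<bar> \<le> M"
proof -
  obtain M where M: "\<And>y h. y \<in> cbox 0 L \<Longrightarrow> h \<in> {0..1} \<Longrightarrow> \<bar>\<phi> i (y + h *\<^sub>R axis k 1) - \<phi> i y\<bar> \<le> M * h"
    using phi_increment_bound[OF assms] by blast
  have "\<bar>diff_quot i k n y\<bar> \<le> M" if "y \<in> cbox 0 L" for n y
  proof -
    have pos: "0 < 1 / real (Suc n)" by simp
    have "\<bar>\<phi> i (y + (1 / Suc n) *\<^sub>R axis k 1) - \<phi> i y\<bar> \<le> M * (1 / Suc n)"
      using M[OF that, of "1 / Suc n"] by simp
    then show ?thesis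
      unfolding diff_quot_def using pos by (metis abs_divide abs_of_pos pos_divide_le_eq)
  qed
  then show ?thesis using that by blast
qed

lemma diff_quot_tendsto:
  assumes "i \<in> {1..N}" "y \<notin> skeleton"
  shows "(\<lambda>n. diff_quot i k n y) \<longlonglongrightarrow> grad (\<phi> i) y $ k"
  unfolding diff_quot_def
  using difference_quotient_tendsto_component[OF phi_has_derivative[OF assms(2,1)], of 1] by simp

lemma integrable_mult_grad_phi:
  assumes i: "i \<in> {1..N}" and w: "continuous_on UNIV w"
  shows "(\<lambda>y. w y * grad (\<phi> i) y $ k) integrable_on cbox 0 L"
proof -
  obtain M where M: "\<And>n y. y \<in> cbox 0 L \<Longrightarrow> \<bar>diff_quot i k n y\<bar> \<le> M"
    using diff_quot_bounded[OF i] by blast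
  obtain W where W: "\<And>y. y \<in> cbox 0 L \<Longrightarrow> norm (w y) \<le> W"
    using continuous_on_compact_bound[OF compact_cbox continuous_on_subset[OF w]] by blast
  show ?thesis
  proof (rule dominated_convergence_cbox_ae(1)[OF _ _ negligible_skeleton])
    show "(\<lambda>y. w y * diff_quot i k n y) integrable_on cbox 0 L" for n
      using w diff_quot_continuous[OF i]
      by (intro integrable_continuous continuous_intros) (auto intro: continuous_on_subset)
    show "\<bar>w y * diff_quot i k n y\<bar> \<le> W * M" if "y \<in> cbox 0 L" for n y
      using W[OF that] M[OF that] by (auto simp: abs_mult intro!: mult_mono)
    show "(\<lambda>n. w y * diff_quot i k n y) \<longlonglongrightarrow> w y * grad (\<phi> i) y $ k" if "y \<notin> skeleton" for y
      by (intro tendsto_intros diff_quot_tendsto[OF i that])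
  qed
qed

lemma integrable_grad_phi_mult_grad_phi:
  assumes i: "i \<in> {1..N}" and j: "j \<in> {1..N}"
  shows "(\<lambda>y. grad (\<phi> i) y $ k * grad (\<phi> j) y $ k) integrable_on cbox 0 L"
proof -
  obtain M where M: "\<And>n y. y \<in> cbox 0 L \<Longrightarrow> \<bar>diff_quot i k n y\<bar> \<le> M"
    using diff_quot_bounded[OF i] by blast
  obtain M' where M': "\<And>n y. y \<in> cbox 0 L \<Longrightarrow> \<bar>diff_quot j k n y\<bar> \<le> M'"
    using diff_quot_bounded[OF j] by blast
  show ?thesis
  proof (rule dominated_convergence_cbox_ae(1)[OF _ _ negligible_skeleton])
    show "(\<lambda>y. diff_quot i k n y * diff_quot j k n y) integrable_on cbox 0 L" for n
      using continuous_on_subset[OF diff_quot_continuous[OF i] subset_UNIV]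
        continuous_on_subset[OF diff_quot_continuous[OF j] subset_UNIV]
      by (intro integrable_continuous continuous_on_mult)
    show "\<bar>diff_quot i k n y * diff_quot j k n y\<bar> \<le> M * M'" if "y \<in> cbox 0 L" for n y
      unfolding abs_mult using M[OF that] M'[OF that] by (intro mult_mono) (auto intro: order_trans[OF abs_ge_zero])
    show "(\<lambda>n. diff_quot i k n y * diff_quot j k n y) \<longlonglongrightarrow> grad (\<phi> i) y $ k * grad (\<phi> j) y $ k"
      if "y \<notin> skeleton" for y
      by (intro tendsto_intros diff_quot_tendsto[OF i that] diff_quot_tendsto[OF j that])
  qed
qed

lemma cmat_component:
  assumes i: "i \<in> {1..N}" and j: "j \<in> {1..N}"
  shows "cmat L \<phi> i j $ k = integral (cbox 0 L) (\<lambda>y. \<phi> i y * grad (\<phi> j) y $ k)"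
proof -
  have "(\<lambda>y. \<phi> i y *\<^sub>R grad (\<phi> j) y) integrable_on cbox 0 L"
  proof (rule integrable_componentwise)
    fix b :: "real^'d" assume "b \<in> Basis"
    then obtain m where b: "b = axis m 1" by (auto simp: Basis_vec_def)
    show "(\<lambda>y. (\<phi> i y *\<^sub>R grad (\<phi> j) y) \<bullet> b) integrable_on cbox 0 L"
      unfolding b using integrable_mult_grad_phi[OF j phi_continuous[OF i], of m] by (simp add: inner_axis)
  qed
  then show ?thesis unfolding cmat_def by (simp add: integral_component_eq_cart[symmetric])
qed

text \<open>\<open>c_ij + c_ji\<close> is the mean of a derivative of the periodic function \<open>\<phi>_i \<phi>_j\<close>.\<close>
lemma cmat_skew:
  assumes i: "i \<in> {1..N}" and j: "j \<in> {1..N}"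
  shows "cmat L \<phi> j i = - cmat L \<phi> i j"
proof -
  have "cmat L \<phi> j i $ k + cmat L \<phi> i j $ k = 0" for k
  proof -
    define G where "G y = \<phi> i y *\<^sub>R grad (\<phi> j) y + \<phi> j y *\<^sub>R grad (\<phi> i) y" for y
    obtain M where M: "\<And>y h. y \<in> cbox 0 L \<Longrightarrow> h \<in> {0..1} \<Longrightarrow>
        \<bar>\<phi> i (y + h *\<^sub>R axis k 1) * \<phi> j (y + h *\<^sub>R axis k 1) - \<phi> i y * \<phi> j y\<bar> \<le> M * h"
      using phi_mult_increment_bound[OF i j] by blast
    have "integral (cbox 0 L) (\<lambda>y. G y $ k) = 0"
    proof (rule integral_cbox_partial_derivative_periodic_eq_0[OF _ _ _ M negligible_skeleton])
      show "continuous_on UNIV (\<lambda>y. \<phi> i y * \<phi> j y)"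
        using phi_continuous[OF i] phi_continuous[OF j] by (intro continuous_intros)
      show "\<phi> i (y + L$k *\<^sub>R axis k 1) * \<phi> j (y + L$k *\<^sub>R axis k 1) = \<phi> i y * \<phi> j y" for y
        using phi_periodic[OF i scaleR_axis_in_lattice] phi_periodic[OF j scaleR_axis_in_lattice] by simp
      show "((\<lambda>y. \<phi> i y * \<phi> j y) has_derivative (\<lambda>v. G y \<bullet> v)) (at y)" if "y \<notin> skeleton" for y
        using has_derivative_mult[OF phi_has_derivative[OF that i] phi_has_derivative[OF that j]]
        by (rule has_derivative_eq_rhs) (auto simp: G_def inner_add_left algebra_simps)
    qed (use L_pos in auto)
    moreover have "integral (cbox 0 L) (\<lambda>y. G y $ k) = cmat L \<phi> j i $ k + cmat L \<phi> i j $ k"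
      unfolding cmat_component[OF i j] cmat_component[OF j i] G_def
      using integral_add[OF integrable_mult_grad_phi[OF j phi_continuous[OF i]]
          integrable_mult_grad_phi[OF i phi_continuous[OF j]]]
      by (simp add: add.commute)
    ultimately show ?thesis by simp
  qed
  then show ?thesis by (simp add: vec_eq_iff eq_neg_iff_add_eq_0)
qed

lemma stiff_row_sum_eq_0:
  assumes i: "i \<in> {1..N}"
  shows "(\<Sum>j\<in>nbhd N \<phi> i. stiff L \<phi> i j) = 0"
proof -
  have sub: "nbhd N \<phi> i \<subseteq> {1..N}" by (auto simp: nbhd_def)
  have "(\<lambda>y. grad (\<phi> i) y \<bullet> grad (\<phi> j) y) integrable_on cbox 0 L" if "j \<in> nbhd N \<phi> i" for j
    unfolding inner_vec_def using integrable_grad_phi_mult_grad_phi[OF i subsetD[OF sub that]]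
    by (intro integrable_sum) (auto simp: mult.commute)
  then have "(\<Sum>j\<in>nbhd N \<phi> i. stiff L \<phi> i j)
      = integral (cbox 0 L) (\<lambda>y. grad (\<phi> i) y \<bullet> (\<Sum>j\<in>nbhd N \<phi> i. grad (\<phi> j) y))"
    unfolding stiff_def inner_sum_right using finite_subset[OF sub]
    by (intro integral_sum[symmetric]) auto
  also have "\<dots> = integral (cbox 0 L) (\<lambda>y. 0)"
    by (rule integral_spike[OF negligible_skeleton]) (use grad_phi_inner_sum_nbhd_eq_0[OF _ i] in auto)
  finally show ?thesis by simp
qed

lemma semidiscrete_energy_rate:
  fixes U U' :: "nat \<Rightarrow> real^'d" and P :: "nat \<Rightarrow> real" and D Dp :: "nat \<Rightarrow> nat \<Rightarrow> real"
  assumes D_sym: "\<forall>i\<in>{1..N}. \<forall>j\<in>{1..N}. D i j = D j i"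
    and D_row: "\<forall>i\<in>{1..N}. (\<Sum>j\<in>{1..N}. D i j) = 0"
    and D_loc: "\<forall>i\<in>{1..N}. \<forall>j\<in>{1..N}. j \<notin> nbhd N \<phi> i \<longrightarrow> D i j = 0"
    and Dp_sym: "\<forall>i\<in>{1..N}. \<forall>j\<in>{1..N}. Dp i j = Dp j i"
    and Dp_row: "\<forall>i\<in>{1..N}. (\<Sum>j\<in>{1..N}. Dp i j) = 0"
    and Dp_loc: "\<forall>i\<in>{1..N}. \<forall>j\<in>{1..N}. j \<notin> nbhd N \<phi> i \<longrightarrow> Dp i j = 0"
    and momentum: "\<forall>i\<in>{1..N}. lumped_mass L \<phi> i *\<^sub>R U' i =
        (\<Sum>j\<in>nbhd N \<phi> i. (D i j - ((U i + U j) /\<^sub>R 2) \<bullet> cmat L \<phi> i j - \<nu> * stiff L \<phi> i j) *\<^sub>R U j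
           - P j *\<^sub>R cmat L \<phi> i j)"
    and constraint: "\<forall>k\<in>{1..N}. 0 = (\<Sum>j\<in>nbhd N \<phi> k. Dp k j * P j - cmat L \<phi> k j \<bullet> U j)"
  shows "(\<Sum>i=1..N. lumped_mass L \<phi> i * (U i \<bullet> U' i))
       = - (\<Sum>i=1..N. \<Sum>j\<in>nbhd N \<phi> i - {i}. (D i j - \<nu> * stiff L \<phi> i j) / 2 * (norm (U j - U i))\<^sup>2
              + Dp i j / 2 * (P j - P i)\<^sup>2)"
proof -
  define nb where "nb = nbhd N \<phi>"
  have nb_sub: "nb i \<subseteq> {1..N}" for i by (auto simp: nb_def nbhd_def)
  have nb_sym: "j \<in> nb i \<longleftrightarrow> i \<in> nb j" if "i \<in> {1..N}" "j \<in> {1..N}" for i j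
    using that by (auto simp: nb_def nbhd_def)
  have row_nb: "(\<Sum>j\<in>nb i. W j) = 0"
    if "(\<Sum>j\<in>{1..N}. W j) = 0" "\<forall>j\<in>{1..N}. j \<notin> nb i \<longrightarrow> W j = 0" for i and W :: "nat \<Rightarrow> real"
    using that by (subst sum.mono_neutral_left[OF _ nb_sub]) auto
  have "(\<Sum>i=1..N. lumped_mass L \<phi> i * (U i \<bullet> U' i)) = (\<Sum>i=1..N. U i \<bullet> (lumped_mass L \<phi> i *\<^sub>R U' i))"
    by (simp add: inner_commute)
  also have "\<dots> = (\<Sum>i=1..N. U i \<bullet> (\<Sum>j\<in>nb i. (D i j - \<nu> * stiff L \<phi> i j
      - ((U i + U j) /\<^sub>R 2) \<bullet> cmat L \<phi> i j) *\<^sub>R U j - P j *\<^sub>R cmat L \<phi> i j))"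
    using momentum by (intro sum.cong refl) (auto simp: nb_def algebra_simps)
  also have "\<dots> = - (\<Sum>i=1..N. \<Sum>j\<in>nb i - {i}. (D i j - \<nu> * stiff L \<phi> i j) / 2 * (norm (U j - U i))\<^sup>2
      + Dp i j / 2 * (P j - P i)\<^sup>2)"
  proof (rule semidiscrete_energy_balance[OF finite_atLeastAtMost nb_sub nb_sym])
    show "D i j - \<nu> * stiff L \<phi> i j = D j i - \<nu> * stiff L \<phi> j i" if "i \<in> {1..N}" "j \<in> {1..N}" for i j
      using D_sym that by (simp add: stiff_def inner_commute)
    show "(\<Sum>j\<in>nb i. D i j - \<nu> * stiff L \<phi> i j) = 0" if "i \<in> {1..N}" for i
      using row_nb[of "D i" i] D_row D_loc stiff_row_sum_eq_0 that
      by (simp add: sum_subtractf sum_distrib_left[symmetric] nb_def)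
    show "(\<Sum>j\<in>nb i. Dp i j) = 0" if "i \<in> {1..N}" for i
      using row_nb[of "Dp i" i] Dp_row Dp_loc that by (simp add: nb_def)
    show "(\<Sum>j\<in>nb k. Dp k j * P j - cmat L \<phi> k j \<bullet> U j) = 0" if "k \<in> {1..N}" for k
      using constraint that by (simp add: nb_def)
    show "Dp i j = Dp j i" if "i \<in> {1..N}" "j \<in> {1..N}" for i j
      using Dp_sym that by simp
    show "cmat L \<phi> j i = - cmat L \<phi> i j" if "i \<in> {1..N}" "j \<in> {1..N}" for i j
      by (rule cmat_skew[OF that])
  qed
  finally show ?thesis by (simp add: nb_def)
qed

end

lemma has_vector_derivative_eta:
  assumes "(f has_vector_derivative f') (at t within S)"
  shows "((\<lambda>s. eta (f s)) has_vector_derivative f t \<bullet> f') (at t within S)"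
  using assms unfolding has_vector_derivative_def eta_def power2_norm_eq_inner
  by (auto intro!: derivative_eq_intros simp: inner_commute algebra_simps)

theorem lemma1:
  fixes L :: "real^'d" and Th :: "(real^'d) set set" and N :: nat
    and x :: "nat \<Rightarrow> real^'d" and \<phi> :: "nat \<Rightarrow> real^'d \<Rightarrow> real"
    and \<nu> T :: real
    and du dp :: "real \<Rightarrow> nat \<Rightarrow> nat \<Rightarrow> real"
    and u u' :: "real \<Rightarrow> nat \<Rightarrow> real^'d" and p :: "real \<Rightarrow> nat \<Rightarrow> real"
  assumes dim: "CARD('d) = 2 \<or> CARD('d) = 3"
    and L_pos: "\<forall>k. L$k > 0"
    and mesh: "periodic_mesh L Th"
    and basis: "P1_nodal_basis L Th N x \<phi>"
    and nu: "\<nu> \<ge> 0"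
    and T: "T > 0"
    and du_sym: "\<forall>t\<in>{0..T}. \<forall>i\<in>{1..N}. \<forall>j\<in>{1..N}. du t i j = du t j i"
    and du_row: "\<forall>t\<in>{0..T}. \<forall>i\<in>{1..N}. (\<Sum>j\<in>{1..N}. du t i j) = 0"
    and du_loc: "\<forall>t\<in>{0..T}. \<forall>i\<in>{1..N}. \<forall>j\<in>{1..N}. j \<notin> nbhd N \<phi> i \<longrightarrow> du t i j = 0"
    and dp_sym: "\<forall>t\<in>{0..T}. \<forall>i\<in>{1..N}. \<forall>j\<in>{1..N}. dp t i j = dp t j i"
    and dp_row: "\<forall>t\<in>{0..T}. \<forall>i\<in>{1..N}. (\<Sum>j\<in>{1..N}. dp t i j) = 0"
    and dp_loc: "\<forall>t\<in>{0..T}. \<forall>i\<in>{1..N}. \<forall>j\<in>{1..N}. j \<notin> nbhd N \<phi> i \<longrightarrow> dp t i j = 0"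
    and u_deriv: "\<forall>i\<in>{1..N}. \<forall>t\<in>{0..T}.
                    ((\<lambda>s. u s i) has_vector_derivative u' t i) (at t within {0..T})"
    and u'_cont: "\<forall>i\<in>{1..N}. continuous_on {0..T} (\<lambda>t. u' t i)"
    and S1: "\<forall>t\<in>{0..T}. \<forall>i\<in>{1..N}.
               lumped_mass L \<phi> i *\<^sub>R u' t i =
               (\<Sum>j\<in>nbhd N \<phi> i.
                  (du t i j - ((u t i + u t j) /\<^sub>R 2) \<bullet> cmat L \<phi> i j - \<nu> * stiff L \<phi> i j) *\<^sub>R u t j
                  - p t j *\<^sub>R cmat L \<phi> i j)"
    and S2: "\<forall>t\<in>{0..T}. \<forall>k\<in>{1..N}.
               0 = (\<Sum>j\<in>nbhd N \<phi> k. dp t k j * p t j - cmat L \<phi> k j \<bullet> u t j)"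
  shows "integral {0..T} (\<lambda>t. \<Sum>i=1..N. \<Sum>j\<in>nbhd N \<phi> i - {i}.
            (du t i j - \<nu> * stiff L \<phi> i j) / 2 * (norm (u t j - u t i))\<^sup>2
            + dp t i j / 2 * (p t j - p t i)\<^sup>2)
         = (\<Sum>i=1..N. lumped_mass L \<phi> i * eta (u 0 i)) - (\<Sum>i=1..N. lumped_mass L \<phi> i * eta (u T i))"
proof -
  interpret periodic_P1_basis L Th N x \<phi> using L_pos mesh basis by unfold_locales
  define E where "E t = (\<Sum>i=1..N. lumped_mass L \<phi> i * eta (u t i))" for t
  define F where "F t = (\<Sum>i=1..N. \<Sum>j\<in>nbhd N \<phi> i - {i}.
      (du t i j - \<nu> * stiff L \<phi> i j) / 2 * (norm (u t j - u t i))\<^sup>2 + dp t i j / 2 * (p t j - p t i)\<^sup>2)" for t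
  have "((\<lambda>t. - E t) has_vector_derivative F t) (at t within {0..T})" if t: "t \<in> {0..T}" for t
  proof -
    have "(E has_vector_derivative (\<Sum>i=1..N. lumped_mass L \<phi> i * (u t i \<bullet> u' t i))) (at t within {0..T})"
      unfolding E_def using u_deriv t
      by (auto intro!: has_vector_derivative_sum has_vector_derivative_mult_right has_vector_derivative_eta)
    moreover have "(\<Sum>i=1..N. lumped_mass L \<phi> i * (u t i \<bullet> u' t i)) = - F t"
      unfolding F_def using t du_sym du_row du_loc dp_sym dp_row dp_loc S1 S2
      by (intro semidiscrete_energy_rate) auto
    ultimately show ?thesis using has_vector_derivative_minus by fastforce
  qed
  then have "(F has_integral (- E T - - E 0)) {0..T}"
    using T by (intro fundamental_theorem_of_calculus) auto
  then show ?thesis unfolding F_def[abs_def] E_def by (simp add: integral_unique)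
qed

end
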